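(* Let $\lambda>0$ and $R_c>0$. Let $\Phi$ be a homogeneous Poisson point process on $\mathbb{R}^2$ of intensity $\lambda$, let $\mathcal{D}=\{y\in\mathbb{R}^2:\|y\|\le R_c\}$ and $\Phi_o=\Phi\setminus\mathcal{D}$. Fix $r_0\in[0,R_c]$, put $x_0=(r_0,0)$ and let $r_1=\min_{y\in\Phi_o}\|y-x_0\|$. Then the (conditional, given $r_0$) probability density function of $r_1$ is $$f_{r_1|r_0}(r)=\begin{cases}0, & r\le R_c-r_0,\\ \lambda\zeta_1(r)e^{-\lambda\zeta_2(r)}, & R_c-r_0<r<R_c+r_0,\\ 2\pi\lambda r\, e^{-\lambda(\pi r^2-\pi R_c^2)}, & \text{otherwise},\end{cases}$$ and its cumulative distribution function is $$F_{r_1|r_0}(r)=\begin{cases}0, & r\le R_c-r_0,\\ 1-e^{-\lambda\zeta_2(r)}, & R_c-r_0<r<R_c+r_0,\\ 1-e^{-\lambda(\pi r^2-\pi R_c^2)}, & \text{otherwise},\end{cases}$$ where $$\zeta_1(r)=2\pi r+\frac{r}{r_0}\sqrt{-\frac{(r-r_0-R_c)(r+r_0-R_c)(r-r_0+R_c)(r+r_0+R_c)}{r_0^2}}-\frac{r}{r_0}\sqrt{-\frac{(-r+r_0-R_c)(r+r_0-R_c)(-r+r_0+R_c)(r+r_0+R_c)}{r_0^2}}-2r\sec^{-1}\frac{2rr_0}{r^2+r_0^2-R_c^2},$$ $$\zeta_2(r)=\pi r^2-\theta_1(r)R_c^2+R_c^2\sin\theta_1(r)\cos\theta_1(r)-\theta_2(r)r^2+r^2\sin\theta_2(r)\cos\theta_2(r),$$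 with $\theta_1(r)=\arccos\frac{R_c^2+r_0^2-r^2}{2R_cr_0}$ and $\theta_2(r)=\arccos\frac{r_0^2+r^2-R_c^2}{2r_0r}$.
   Context: $\Phi_o$ models the working ground base stations outside the circular malfunction area $\mathcal{D}$ centered at the origin; $x_0$ is a user located at horizontal distance $r_0$ from the center, and $r_1$ is the distance from the user to its nearest working ground base station. When $r_0=0$ the middle case is empty. *)

theory Defs
  imports "HOL-Probability.Probability"
begin

definition poisson_point_process ::
  "'s measure \<Rightarrow> ('s \<Rightarrow> (real \<times> real) set) \<Rightarrow> real \<Rightarrow> bool" where
  "poisson_point_process M Phi lam \<longleftrightarrow>
     prob_space M \<and>
     (\<forall>\<omega>\<in>space M. \<forall>A. bounded A \<longrightarrow> finite (Phi \<omega> \<inter> A)) \<and>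
     (\<forall>A. A \<in> sets lborel \<and> bounded A \<longrightarrow>
        (\<forall>k::nat. measure M {\<omega>\<in>space M. card (Phi \<omega> \<inter> A) = k}
             = (lam * measure lborel A) ^ k / fact k * exp (- lam * measure lborel A))) \<and>
     (\<forall>(I::nat set) (A::nat \<Rightarrow> (real \<times> real) set).
        finite I \<and> (\<forall>i\<in>I. A i \<in> sets lborel \<and> bounded (A i)) \<and> disjoint_family_on A I \<longrightarrow>
        prob_space.indep_vars M (\<lambda>_. count_space UNIV) (\<lambda>i \<omega>. card (Phi \<omega> \<inter> A i)) I)"

definition arcsec :: "real \<Rightarrow> real" where
  "arcsec x = arccos (1 / x)"

definition theta1 :: "real \<Rightarrow> real \<Rightarrow> real \<Rightarrow> real" where
  "theta1 Rc r0 r = arccos ((Rc\<^sup>2 + r0\<^sup>2 - r\<^sup>2) / (2 * Rc * r0))"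

definition theta2 :: "real \<Rightarrow> real \<Rightarrow> real \<Rightarrow> real" where
  "theta2 Rc r0 r = arccos ((r0\<^sup>2 + r\<^sup>2 - Rc\<^sup>2) / (2 * r0 * r))"

definition zeta1 :: "real \<Rightarrow> real \<Rightarrow> real \<Rightarrow> real" where
  "zeta1 Rc r0 r =
     2 * pi * r
     + r / r0 * sqrt (- ((r - r0 - Rc) * (r + r0 - Rc) * (r - r0 + Rc) * (r + r0 + Rc)) / r0\<^sup>2)
     - r / r0 * sqrt (- ((- r + r0 - Rc) * (r + r0 - Rc) * (- r + r0 + Rc) * (r + r0 + Rc)) / r0\<^sup>2)
     - 2 * r * arcsec (2 * r * r0 / (r\<^sup>2 + r0\<^sup>2 - Rc\<^sup>2))"

definition zeta2 :: "real \<Rightarrow> real \<Rightarrow> real \<Rightarrow> real" where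
  "zeta2 Rc r0 r =
     pi * r\<^sup>2 - theta1 Rc r0 r * Rc\<^sup>2 + Rc\<^sup>2 * sin (theta1 Rc r0 r) * cos (theta1 Rc r0 r)
     - theta2 Rc r0 r * r\<^sup>2 + r\<^sup>2 * sin (theta2 Rc r0 r) * cos (theta2 Rc r0 r)"

definition pdf_r1 :: "real \<Rightarrow> real \<Rightarrow> real \<Rightarrow> real \<Rightarrow> real" where
  "pdf_r1 lam Rc r0 r =
     (if r \<le> Rc - r0 then 0
      else if r < Rc + r0 then lam * zeta1 Rc r0 r * exp (- lam * zeta2 Rc r0 r)
      else 2 * pi * lam * r * exp (- lam * (pi * r\<^sup>2 - pi * Rc\<^sup>2)))"

definition cdf_r1 :: "real \<Rightarrow> real \<Rightarrow> real \<Rightarrow> real \<Rightarrow> real" where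
  "cdf_r1 lam Rc r0 r =
     (if r \<le> Rc - r0 then 0
      else if r < Rc + r0 then 1 - exp (- lam * zeta2 Rc r0 r)
      else 1 - exp (- lam * (pi * r\<^sup>2 - pi * Rc\<^sup>2)))"

end

theory Submission
  imports Defs "HOL-Real_Asymp.Real_Asymp"
begin

text \<open>The event \<open>r1 > r\<close> says that the process has no point in the lune
  \<open>cball (r0, 0) r - cball 0 Rc\<close>, so by the Poisson property \<open>P(r1 \<le> r) = 1 - exp (- lam * A r)\<close>,
  \<open>A r\<close> being the area of the lune; the null event that no point at all lies outside the disc is
  irrelevant. The lune is the disc of radius \<open>r\<close> minus its lens-shaped intersection with the disc
  of radius \<open>Rc\<close>; slicing the lens by vertical lines splits it into two circular segments, and
  this gives \<open>A r = zeta2 r\<close> for \<open>Rc - r0 < r < Rc + r0\<close>. The distribution function is continuous, and away from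
  \<open>r = Rc \<plusminus> r0\<close> its derivative is \<open>lam * zeta1 r * exp (- lam * zeta2 r)\<close>, where \<open>zeta1 r\<close> is
  the length of the part of the circle of radius \<open>r\<close> outside the disc.\<close>

section \<open>Circular segments\<close>

text \<open>Area of the part of the unit disc beyond a chord at signed distance \<open>u\<close> from the centre.\<close>

definition unit_segment_area :: "real \<Rightarrow> real" where
  "unit_segment_area u = arccos u - u * sqrt (1 - u\<^sup>2)"

lemma unit_segment_area_has_derivative:
  assumes "-1 < u" "u < 1"
  shows "(unit_segment_area has_real_derivative (-2 * sqrt (1 - u\<^sup>2))) (at u)"
proof -
  have s: "sqrt (1 - u\<^sup>2) > 0"
    using assms by (simp add: abs_square_less_1 abs_less_iff)
  have sq: "sqrt (1 - u\<^sup>2) * sqrt (1 - u\<^sup>2) = 1 - u\<^sup>2"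
    using s by (metis less_eq_real_def real_sqrt_pow2 power2_eq_square real_sqrt_ge_0_iff)
  have "(unit_segment_area has_real_derivative
      inverse (- sqrt (1 - u\<^sup>2)) - (1 * sqrt (1 - u\<^sup>2) + u * (inverse (sqrt (1 - u\<^sup>2)) / 2 * (- (2 * u))))) (at u)"
    unfolding unit_segment_area_def[abs_def]
    by (intro derivative_intros DERIV_arccos assms) (use s in \<open>auto intro!: derivative_eq_intros\<close>)
  moreover have "inverse (- sqrt (1 - u\<^sup>2)) - (1 * sqrt (1 - u\<^sup>2) + u * (inverse (sqrt (1 - u\<^sup>2)) / 2 * (- (2 * u))))
      = -2 * sqrt (1 - u\<^sup>2)"
    using s sq by (simp add: field_simps) (simp add: algebra_simps power2_eq_square)
  ultimately show ?thesis by (rule DERIV_cong)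
qed

lemma unit_segment_area_1 [simp]: "unit_segment_area 1 = 0"
  and unit_segment_area_minus_1 [simp]: "unit_segment_area (-1) = pi"
  unfolding unit_segment_area_def by simp_all

lemma continuous_on_unit_segment_area:
  "continuous_on S f \<Longrightarrow> (\<And>x. x \<in> S \<Longrightarrow> \<bar>f x\<bar> \<le> 1) \<Longrightarrow> continuous_on S (\<lambda>x. unit_segment_area (f x))"
  unfolding unit_segment_area_def by (intro continuous_intros) (auto simp: abs_le_iff)

definition chord_primitive :: "real \<Rightarrow> real \<Rightarrow> real" where
  "chord_primitive \<rho> t = t * sqrt (\<rho>\<^sup>2 - t\<^sup>2) + \<rho>\<^sup>2 * arcsin (t / \<rho>)"

lemma chord_primitive_has_derivative:
  assumes "\<rho> > 0" "\<bar>t\<bar> < \<rho>"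
  shows "(chord_primitive \<rho> has_real_derivative 2 * sqrt (\<rho>\<^sup>2 - t\<^sup>2)) (at t)"
proof -
  have "\<bar>t\<bar>\<^sup>2 < \<rho>\<^sup>2" using assms by (intro power_strict_mono) auto
  then have pos: "\<rho>\<^sup>2 - t\<^sup>2 > 0" by simp
  then have s: "sqrt (\<rho>\<^sup>2 - t\<^sup>2) > 0" by simp
  have sq: "sqrt (\<rho>\<^sup>2 - t\<^sup>2) * sqrt (\<rho>\<^sup>2 - t\<^sup>2) = \<rho>\<^sup>2 - t\<^sup>2" using pos by simp
  have b: "-1 < t / \<rho>" "t / \<rho> < 1" using assms by (auto simp: field_simps abs_less_iff)
  have "1 - (t / \<rho>)\<^sup>2 = (\<rho>\<^sup>2 - t\<^sup>2) / \<rho>\<^sup>2" using assms by (simp add: field_simps power2_eq_square)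
  then have e: "sqrt (1 - (t / \<rho>)\<^sup>2) = sqrt (\<rho>\<^sup>2 - t\<^sup>2) / \<rho>" using assms by (simp add: real_sqrt_divide)
  have "(chord_primitive \<rho> has_real_derivative
      1 * sqrt (\<rho>\<^sup>2 - t\<^sup>2) + t * (inverse (sqrt (\<rho>\<^sup>2 - t\<^sup>2)) / 2 * (0 - 2 * t))
        + \<rho>\<^sup>2 * (inverse (sqrt (1 - (t / \<rho>)\<^sup>2)) * (1 / \<rho>))) (at t)"
    unfolding chord_primitive_def[abs_def] using s b by (auto intro!: derivative_eq_intros)
  moreover have "1 * sqrt (\<rho>\<^sup>2 - t\<^sup>2) + t * (inverse (sqrt (\<rho>\<^sup>2 - t\<^sup>2)) / 2 * (0 - 2 * t))
        + \<rho>\<^sup>2 * (inverse (sqrt (1 - (t / \<rho>)\<^sup>2)) * (1 / \<rho>)) = 2 * sqrt (\<rho>\<^sup>2 - t\<^sup>2)"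
    unfolding e using s sq assms by (simp add: field_simps) (simp add: algebra_simps power2_eq_square)
  ultimately show ?thesis by (rule DERIV_cong)
qed

lemma chord_primitive_scaled:
  assumes "\<rho> > 0" "\<bar>v\<bar> \<le> 1"
  shows "chord_primitive \<rho> (\<rho> * v) = \<rho>\<^sup>2 * (v * sqrt (1 - v\<^sup>2) + arcsin v)"
proof -
  have "\<rho>\<^sup>2 - (\<rho> * v)\<^sup>2 = \<rho>\<^sup>2 * (1 - v\<^sup>2)" by (simp add: algebra_simps)
  then have "sqrt (\<rho>\<^sup>2 - (\<rho> * v)\<^sup>2) = \<rho> * sqrt (1 - v\<^sup>2)" using assms by (simp add: real_sqrt_mult)
  then show ?thesis unfolding chord_primitive_def using assms by (simp add: algebra_simps power2_eq_square)
qed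

lemma chord_primitive_radius:
  assumes "\<rho> > 0"
  shows "chord_primitive \<rho> \<rho> = pi / 2 * \<rho>\<^sup>2" "chord_primitive \<rho> (- \<rho>) = - pi / 2 * \<rho>\<^sup>2"
  using assms by (simp_all add: chord_primitive_def)

lemma chord_length_has_integral:
  assumes "\<rho> > 0" "c - \<rho> \<le> lo" "lo \<le> hi" "hi \<le> c + \<rho>"
  shows "((\<lambda>x. 2 * sqrt (\<rho>\<^sup>2 - (x - c)\<^sup>2)) has_integral
           chord_primitive \<rho> (hi - c) - chord_primitive \<rho> (lo - c)) {lo..hi}"
proof -
  have "((\<lambda>x. 2 * sqrt (\<rho>\<^sup>2 - (x - c)\<^sup>2)) has_integral
      (\<lambda>x. chord_primitive \<rho> (x - c)) hi - (\<lambda>x. chord_primitive \<rho> (x - c)) lo) {lo..hi}"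
  proof (rule fundamental_theorem_of_calculus_interior[OF assms(3)])
    show "continuous_on {lo..hi} (\<lambda>x. chord_primitive \<rho> (x - c))"
      unfolding chord_primitive_def using assms by (intro continuous_intros) (auto simp: field_simps)
    fix x assume "x \<in> {lo<..<hi}"
    then have "\<bar>x - c\<bar> < \<rho>" using assms by auto
    moreover have "((\<lambda>x. x - c) has_real_derivative 1) (at x)"
      by (auto intro!: derivative_eq_intros)
    ultimately have "((\<lambda>x. chord_primitive \<rho> (x - c)) has_real_derivative 2 * sqrt (\<rho>\<^sup>2 - (x - c)\<^sup>2)) (at x)"
      using DERIV_chain2[OF chord_primitive_has_derivative[OF assms(1)]] by fastforce
    then show "((\<lambda>x. chord_primitive \<rho> (x - c)) has_vector_derivative 2 * sqrt (\<rho>\<^sup>2 - (x - c)\<^sup>2)) (at x)"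
      by (simp add: has_real_derivative_iff_has_vector_derivative)
  qed
  then show ?thesis by simp
qed

lemma disc_segment_has_integral:
  assumes "\<rho> > 0" "\<bar>u\<bar> \<le> 1"
  shows "((\<lambda>x. 2 * sqrt (\<rho>\<^sup>2 - (x - c)\<^sup>2)) has_integral \<rho>\<^sup>2 * unit_segment_area u) {c + \<rho> * u .. c + \<rho>}"
proof -
  have "- \<rho> \<le> \<rho> * u" "\<rho> * u \<le> \<rho>"
    using mult_left_mono[of u 1 \<rho>] mult_left_mono[of "-1" u \<rho>] assms by (auto simp: abs_le_iff)
  then have "((\<lambda>x. 2 * sqrt (\<rho>\<^sup>2 - (x - c)\<^sup>2)) has_integral
           chord_primitive \<rho> \<rho> - chord_primitive \<rho> (\<rho> * u)) {c + \<rho> * u .. c + \<rho>}"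
    using chord_length_has_integral[of \<rho> c "c + \<rho> * u" "c + \<rho>"] assms by simp
  also have "chord_primitive \<rho> \<rho> - chord_primitive \<rho> (\<rho> * u) = \<rho>\<^sup>2 * unit_segment_area u"
    using assms unfolding chord_primitive_scaled[OF assms] chord_primitive_radius[OF assms(1)]
    by (simp add: unit_segment_area_def arccos_arcsin_eq abs_le_iff algebra_simps)
  finally show ?thesis .
qed

lemma disc_segment_has_integral':
  assumes "\<rho> > 0" "\<bar>u\<bar> \<le> 1"
  shows "((\<lambda>x. 2 * sqrt (\<rho>\<^sup>2 - (x - c)\<^sup>2)) has_integral \<rho>\<^sup>2 * unit_segment_area u) {c - \<rho> .. c - \<rho> * u}"
proof -
  have "- \<rho> \<le> \<rho> * u" "\<rho> * u \<le> \<rho>"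
    using mult_left_mono[of u 1 \<rho>] mult_left_mono[of "-1" u \<rho>] assms by (auto simp: abs_le_iff)
  then have "((\<lambda>x. 2 * sqrt (\<rho>\<^sup>2 - (x - c)\<^sup>2)) has_integral
           chord_primitive \<rho> (\<rho> * - u) - chord_primitive \<rho> (- \<rho>)) {c - \<rho> .. c - \<rho> * u}"
    using chord_length_has_integral[of \<rho> c "c - \<rho>" "c - \<rho> * u"] assms by simp
  also have "chord_primitive \<rho> (\<rho> * - u) = \<rho>\<^sup>2 * (- u * sqrt (1 - u\<^sup>2) - arcsin u)"
    using chord_primitive_scaled[OF assms(1), of "-u"] assms by (simp add: arcsin_minus abs_le_iff)
  also have "\<dots> - chord_primitive \<rho> (- \<rho>) = \<rho>\<^sup>2 * unit_segment_area u"
    using assms unfolding chord_primitive_radius[OF assms(1)]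
    by (simp add: unit_segment_area_def arccos_arcsin_eq abs_le_iff algebra_simps)
  finally show ?thesis .
qed

section \<open>The lens and the lune\<close>

text \<open>By the law of cosines, \<open>theta1\<close> and \<open>theta2\<close> are the angles at \<open>0\<close> and at \<open>(r0, 0)\<close>
  of the triangle formed with a common point of the circles of radii \<open>Rc\<close> and \<open>r\<close> around them.\<close>

definition cos_theta1 :: "real \<Rightarrow> real \<Rightarrow> real \<Rightarrow> real" where
  "cos_theta1 Rc r0 r = (Rc\<^sup>2 + r0\<^sup>2 - r\<^sup>2) / (2 * Rc * r0)"

definition cos_theta2 :: "real \<Rightarrow> real \<Rightarrow> real \<Rightarrow> real" where
  "cos_theta2 Rc r0 r = (r0\<^sup>2 + r\<^sup>2 - Rc\<^sup>2) / (2 * r0 * r)"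

lemma cos_theta_strict_bounds:
  assumes "0 < r0" "r0 \<le> Rc" "Rc - r0 < r" "r < Rc + r0"
  shows "-1 < cos_theta1 Rc r0 r" "cos_theta1 Rc r0 r < 1" "-1 < cos_theta2 Rc r0 r" "cos_theta2 Rc r0 r < 1"
proof -
  have r: "0 < r" using assms by linarith
  have d: "2 * Rc * r0 > 0" "2 * r0 * r > 0" using assms r by auto
  have "(Rc - r0)\<^sup>2 < r\<^sup>2" using assms by (intro power_strict_mono) auto
  then show "cos_theta1 Rc r0 r < 1" unfolding cos_theta1_def using d by (simp add: power2_diff)
  have "r\<^sup>2 < (Rc + r0)\<^sup>2" using assms r by (intro power_strict_mono) auto
  then show "-1 < cos_theta1 Rc r0 r" unfolding cos_theta1_def using d by (simp add: field_simps power2_sum)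
  have "\<bar>r - r0\<bar>\<^sup>2 < Rc\<^sup>2" using assms r by (intro power_strict_mono) auto
  then show "cos_theta2 Rc r0 r < 1" unfolding cos_theta2_def using d by (simp add: power2_diff mult_ac)
  have "Rc\<^sup>2 < (r + r0)\<^sup>2" using assms r by (intro power_strict_mono) auto
  then show "-1 < cos_theta2 Rc r0 r" unfolding cos_theta2_def using d by (simp add: field_simps power2_sum)
qed

lemma cos_theta_bounds:
  assumes "0 < r0" "r0 \<le> Rc" "Rc - r0 \<le> r" "r \<le> Rc + r0"
  shows "\<bar>cos_theta1 Rc r0 r\<bar> \<le> 1" "\<bar>cos_theta2 Rc r0 r\<bar> \<le> 1"
proof -
  have "\<bar>cos_theta1 Rc r0 r\<bar> \<le> 1 \<and> \<bar>cos_theta2 Rc r0 r\<bar> \<le> 1"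
  proof (cases "r = 0")
    case True
    then have "r0 = Rc" using assms by linarith
    then show ?thesis using True assms by (simp add: cos_theta1_def cos_theta2_def power2_eq_square)
  next
    case False
    then have r: "0 < r" using assms by linarith
    have d: "2 * Rc * r0 > 0" "2 * r0 * r > 0" using assms r by auto
    have "(Rc - r0)\<^sup>2 \<le> r\<^sup>2" using assms by (intro power_mono) auto
    then have "cos_theta1 Rc r0 r \<le> 1" unfolding cos_theta1_def using d by (simp add: power2_diff)
    moreover have "r\<^sup>2 \<le> (Rc + r0)\<^sup>2" using assms r by (intro power_mono) auto
    then have "-1 \<le> cos_theta1 Rc r0 r" unfolding cos_theta1_def using d by (simp add: field_simps power2_sum)
    moreover have "\<bar>r - r0\<bar>\<^sup>2 \<le> Rc\<^sup>2" using assms r by (intro power_mono) auto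
    then have "cos_theta2 Rc r0 r \<le> 1" unfolding cos_theta2_def using d by (simp add: power2_diff mult_ac)
    moreover have "Rc\<^sup>2 \<le> (r + r0)\<^sup>2" using assms r by (intro power_mono) auto
    then have "-1 \<le> cos_theta2 Rc r0 r" unfolding cos_theta2_def using d by (simp add: field_simps power2_sum)
    ultimately show ?thesis by (simp add: abs_le_iff)
  qed
  then show "\<bar>cos_theta1 Rc r0 r\<bar> \<le> 1" "\<bar>cos_theta2 Rc r0 r\<bar> \<le> 1" by auto
qed

definition lens_chord :: "real \<Rightarrow> real \<Rightarrow> real \<Rightarrow> real \<Rightarrow> real" where
  "lens_chord Rc r0 r x = 2 * sqrt (max 0 (min (r\<^sup>2 - (x - r0)\<^sup>2) (Rc\<^sup>2 - x\<^sup>2)))"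

lemma mem_cball_Pair_iff:
  fixes a b x y r :: real
  assumes "r \<ge> 0"
  shows "(x, y) \<in> cball (a, b) r \<longleftrightarrow> (x - a)\<^sup>2 + (y - b)\<^sup>2 \<le> r\<^sup>2"
proof -
  have "(x, y) \<in> cball (a, b) r \<longleftrightarrow> sqrt ((x - a)\<^sup>2 + (y - b)\<^sup>2) \<le> r"
    by (simp add: dist_Pair_Pair dist_real_def power2_commute)
  also have "\<dots> \<longleftrightarrow> (x - a)\<^sup>2 + (y - b)\<^sup>2 \<le> r\<^sup>2"
    using assms sqrt_le_D real_le_lsqrt by blast
  finally show ?thesis .
qed

lemma emeasure_lens_slice:
  fixes x r Rc r0 :: real
  assumes "r \<ge> 0" "Rc \<ge> 0"
  shows "emeasure lborel (Pair x -` (cball (r0, 0::real) r \<inter> cball 0 Rc)) = ennreal (lens_chord Rc r0 r x)"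
proof -
  define g where "g = min (r\<^sup>2 - (x - r0)\<^sup>2) (Rc\<^sup>2 - x\<^sup>2)"
  have "Pair x -` (cball (r0, 0) r \<inter> cball 0 Rc) = {y. y\<^sup>2 \<le> g}"
    using mem_cball_Pair_iff[OF assms(1), of x _ r0 0] mem_cball_Pair_iff[OF assms(2), of x _ 0 0]
    by (auto simp: g_def zero_prod_def simp del: mem_cball mem_cball_0)
  also have "{y. y\<^sup>2 \<le> g} = (if g \<ge> 0 then {- sqrt g .. sqrt g} else {})"
  proof (cases "g \<ge> 0")
    case True
    have "y\<^sup>2 \<le> g \<longleftrightarrow> y \<in> {- sqrt g .. sqrt g}" for y
      using real_sqrt_le_iff[of "y\<^sup>2" g] by (simp only: real_sqrt_abs atLeastAtMost_iff abs_le_iff) auto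
    then show ?thesis using True by (simp add: set_eq_iff)
  qed (auto intro: order.trans[OF zero_le_power2])
  finally have slice: "Pair x -` (cball (r0, 0) r \<inter> cball 0 Rc) = (if g \<ge> 0 then {- sqrt g .. sqrt g} else {})" .
  show ?thesis unfolding slice lens_chord_def g_def[symmetric] by (simp add: max_def)
qed

lemma lens_chord_has_integral:
  assumes "0 < r0" "r0 \<le> Rc" "Rc - r0 < r" "r < Rc + r0"
  shows "(lens_chord Rc r0 r has_integral
           r\<^sup>2 * unit_segment_area (cos_theta2 Rc r0 r) + Rc\<^sup>2 * unit_segment_area (cos_theta1 Rc r0 r))
         {r0 - r .. Rc}"
proof -
  note bounds = cos_theta_strict_bounds[OF assms]
  have r: "r > 0" and Rc: "Rc > 0" using assms by linarith+
  define a where "a = (Rc\<^sup>2 + r0\<^sup>2 - r\<^sup>2) / (2 * r0)"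
  have a_eq: "r0 - r * cos_theta2 Rc r0 r = a" "Rc * cos_theta1 Rc r0 r = a"
    unfolding a_def cos_theta1_def cos_theta2_def using r Rc assms(1) by (simp_all add: field_simps power2_eq_square)
  have a_crit: "(r\<^sup>2 - (x - r0)\<^sup>2) - (Rc\<^sup>2 - x\<^sup>2) = 2 * r0 * (x - a)" for x
    unfolding a_def using assms(1) by (simp add: field_simps power2_diff)
  have "r * cos_theta2 Rc r0 r < r" "- Rc < Rc * cos_theta1 Rc r0 r"
    using mult_strict_left_mono[of "cos_theta2 Rc r0 r" 1 r] mult_strict_left_mono[of "-1" "cos_theta1 Rc r0 r" Rc]
      bounds r Rc by auto
  then have a_bounds: "r0 - r < a" "- Rc < a" using a_eq by auto
  have left: "(lens_chord Rc r0 r has_integral r\<^sup>2 * unit_segment_area (cos_theta2 Rc r0 r)) {r0 - r .. a}"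
  proof (rule has_integral_eq[OF _ disc_segment_has_integral'[OF r, of "cos_theta2 Rc r0 r" r0, unfolded a_eq(1)]])
    fix x assume x: "x \<in> {r0 - r .. a}"
    have "\<bar>x - r0\<bar> \<le> r" using x a_eq(1) bounds r mult_left_mono[of "-1" "cos_theta2 Rc r0 r" r] by auto
    then have "(x - r0)\<^sup>2 \<le> r\<^sup>2" using r by (metis abs_le_square_iff abs_of_pos)
    moreover have "2 * r0 * (x - a) \<le> 0" using x assms(1) by (simp add: mult_nonneg_nonpos)
    then have "r\<^sup>2 - (x - r0)\<^sup>2 \<le> Rc\<^sup>2 - x\<^sup>2" using a_crit[of x] by linarith
    ultimately show "2 * sqrt (r\<^sup>2 - (x - r0)\<^sup>2) = lens_chord Rc r0 r x"
      by (simp add: lens_chord_def)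
  qed (use bounds in auto)
  have "((\<lambda>x. 2 * sqrt (Rc\<^sup>2 - x\<^sup>2)) has_integral Rc\<^sup>2 * unit_segment_area (cos_theta1 Rc r0 r)) {a .. Rc}"
    using disc_segment_has_integral[OF Rc, of "cos_theta1 Rc r0 r" 0] bounds a_eq(2) by simp
  then have right: "(lens_chord Rc r0 r has_integral Rc\<^sup>2 * unit_segment_area (cos_theta1 Rc r0 r)) {a .. Rc}"
  proof (rule has_integral_eq[rotated])
    fix x assume x: "x \<in> {a .. Rc}"
    then have "\<bar>x\<bar> \<le> Rc" using a_bounds by auto
    then have "x\<^sup>2 \<le> Rc\<^sup>2" using Rc by (metis abs_le_square_iff abs_of_pos)
    moreover have "0 \<le> 2 * r0 * (x - a)" using x assms(1) by simp
    then have "Rc\<^sup>2 - x\<^sup>2 \<le> r\<^sup>2 - (x - r0)\<^sup>2" using a_crit[of x] by linarith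
    ultimately show "2 * sqrt (Rc\<^sup>2 - x\<^sup>2) = lens_chord Rc r0 r x"
      by (simp add: lens_chord_def)
  qed
  show ?thesis
    using has_integral_combine[OF _ _ left right] a_bounds a_eq(2) bounds Rc
      mult_left_mono[of "cos_theta1 Rc r0 r" 1 Rc] by auto
qed

lemma measure_lens:
  assumes "0 < r0" "r0 \<le> Rc" "Rc - r0 < r" "r < Rc + r0"
  shows "measure lborel (cball (r0, 0::real) r \<inter> cball 0 Rc)
       = r\<^sup>2 * unit_segment_area (cos_theta2 Rc r0 r) + Rc\<^sup>2 * unit_segment_area (cos_theta1 Rc r0 r)"
    (is "measure lborel ?L = ?V")
proof -
  have r: "r > 0" and Rc: "Rc > 0" using assms by linarith+
  have outside: "lens_chord Rc r0 r x = 0" if "x \<notin> {r0 - r .. Rc}" for x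
  proof -
    from that consider "r < \<bar>x - r0\<bar>" | "Rc < \<bar>x\<bar>" by force
    then have "r\<^sup>2 < (x - r0)\<^sup>2 \<or> Rc\<^sup>2 < x\<^sup>2"
      using r Rc by cases (metis abs_le_square_iff abs_of_pos not_le)+
    then show ?thesis by (auto simp: lens_chord_def)
  qed
  have L_sets: "?L \<in> sets (lborel \<Otimes>\<^sub>M lborel)" unfolding lborel_prod by auto
  have "emeasure lborel ?L = emeasure (lborel \<Otimes>\<^sub>M lborel) ?L" by (simp add: lborel_prod)
  also have "\<dots> = (\<integral>\<^sup>+x. emeasure lborel (Pair x -` ?L) \<partial>lborel)"
    by (rule lborel.emeasure_pair_measure_alt[OF L_sets])
  also have "\<dots> = (\<integral>\<^sup>+x. ennreal (lens_chord Rc r0 r x) * indicator {r0 - r .. Rc} x \<partial>lborel)"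
    using emeasure_lens_slice r Rc outside by (intro nn_integral_cong) (auto simp: indicator_def)
  also have "\<dots> = ennreal ?V"
    by (rule nn_integral_has_integral_lebesgue'[OF _ lens_chord_has_integral[OF assms]]) (simp add: lens_chord_def)
  finally show ?thesis
    using has_integral_nonneg[OF lens_chord_has_integral[OF assms]] by (simp add: measure_def lens_chord_def)
qed

definition lune_area_segments :: "real \<Rightarrow> real \<Rightarrow> real \<Rightarrow> real" where
  "lune_area_segments Rc r0 r = pi * r\<^sup>2 - Rc\<^sup>2 * unit_segment_area (cos_theta1 Rc r0 r)
                                  - r\<^sup>2 * unit_segment_area (cos_theta2 Rc r0 r)"

definition lune_area :: "real \<Rightarrow> real \<Rightarrow> real \<Rightarrow> real" where
  "lune_area Rc r0 r =
     (if r \<le> Rc - r0 then 0 else if r < Rc + r0 then zeta2 Rc r0 r else pi * r\<^sup>2 - pi * Rc\<^sup>2)"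

text \<open>Length of the part of the circle of radius \<open>r\<close> around \<open>(r0, 0)\<close> outside the disc of
  radius \<open>Rc\<close>: the arc inside the disc subtends the angle \<open>2 * theta2\<close> (see \<open>zeta1_eq\<close>).\<close>

definition outer_arc_length :: "real \<Rightarrow> real \<Rightarrow> real \<Rightarrow> real" where
  "outer_arc_length Rc r0 r =
     (if r \<le> Rc - r0 then 0 else if r < Rc + r0 then zeta1 Rc r0 r else 2 * pi * r)"

lemma zeta2_eq_lune_area_segments:
  assumes "\<bar>cos_theta1 Rc r0 r\<bar> \<le> 1" "\<bar>cos_theta2 Rc r0 r\<bar> \<le> 1"
  shows "zeta2 Rc r0 r = lune_area_segments Rc r0 r"
proof -
  have "theta1 Rc r0 r = arccos (cos_theta1 Rc r0 r)" "theta2 Rc r0 r = arccos (cos_theta2 Rc r0 r)"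
    unfolding theta1_def theta2_def cos_theta1_def cos_theta2_def by simp_all
  then show ?thesis
    unfolding zeta2_def lune_area_segments_def unit_segment_area_def
    using sin_arccos_abs[OF assms(1)] sin_arccos_abs[OF assms(2)] cos_arccos_abs[OF assms(1)] cos_arccos_abs[OF assms(2)]
    by (simp add: algebra_simps)
qed

lemma zeta1_eq: "zeta1 Rc r0 r = 2 * pi * r - 2 * r * arccos (cos_theta2 Rc r0 r)"
proof -
  have sym: "(- r + r0 - Rc) * (r + r0 - Rc) * (- r + r0 + Rc) * (r + r0 + Rc)
      = (r - r0 - Rc) * (r + r0 - Rc) * (r - r0 + Rc) * (r + r0 + Rc)"
    by (simp add: algebra_simps)
  have "1 / (2 * r * r0 / (r\<^sup>2 + r0\<^sup>2 - Rc\<^sup>2)) = cos_theta2 Rc r0 r"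
    unfolding cos_theta2_def by (simp add: ac_simps)
  then show ?thesis unfolding zeta1_def arcsec_def sym by simp
qed

lemma measure_cball_real_pair: "r \<ge> 0 \<Longrightarrow> measure lborel (cball (c :: real \<times> real) r) = pi * r\<^sup>2"
  by (simp add: content_cball unit_ball_vol_2 power2_eq_square)

lemma measure_lune:
  assumes "0 \<le> r0" "r0 \<le> Rc"
  shows "measure lborel (cball (r0, 0::real) r - cball 0 Rc) = lune_area Rc r0 r"
proof -
  have dist: "dist (r0, 0::real) 0 = r0" using assms by (simp add: zero_prod_def dist_Pair_Pair)
  have fin: "emeasure lborel (cball (r0, 0::real) r) < \<infinity>" by (rule emeasure_lborel_cball_finite)
  consider "r \<le> Rc - r0" | "Rc - r0 < r" "r < Rc + r0" | "Rc + r0 \<le> r" by linarith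
  then show ?thesis
  proof cases
    case 1
    then have "cball (r0, 0::real) r \<subseteq> cball 0 Rc" using dist by (simp add: cball_subset_cball_iff)
    then have empty: "cball (r0, 0::real) r - cball 0 Rc = {}" by blast
    show ?thesis unfolding empty using 1 by (simp add: lune_area_def)
  next
    case 2
    then have "r0 > 0" "r > 0" using assms by linarith+
    have "measure lborel (cball (r0, 0::real) r - cball 0 Rc)
        = measure lborel (cball (r0, 0::real) r - (cball (r0, 0::real) r \<inter> cball 0 Rc))"
      by (rule arg_cong[where f = "measure lborel"]) blast
    also have "\<dots> = pi * r\<^sup>2 - measure lborel (cball (r0, 0::real) r \<inter> cball 0 Rc)"
      using fin \<open>r > 0\<close> by (subst measure_Diff) (auto simp: measure_cball_real_pair)
    also have "\<dots> = zeta2 Rc r0 r"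
      using measure_lens[OF \<open>r0 > 0\<close> assms(2) 2] cos_theta_strict_bounds[OF \<open>r0 > 0\<close> assms(2) 2]
      by (simp add: zeta2_eq_lune_area_segments lune_area_segments_def)
    finally show ?thesis using 2 by (simp add: lune_area_def)
  next
    case 3
    then have "cball 0 Rc \<subseteq> cball (r0, 0::real) r" using dist by (simp add: cball_subset_cball_iff dist_commute)
    then have "measure lborel (cball (r0, 0::real) r - cball 0 Rc) = pi * r\<^sup>2 - pi * Rc\<^sup>2"
      using fin 3 assms by (subst measure_Diff) (auto simp: measure_cball_real_pair)
    then show ?thesis using 3 assms by (simp add: lune_area_def)
  qed
qed

lemma law_of_sines_theta:
  assumes "r0 > 0" "Rc > 0" "r > 0"
  shows "Rc * sqrt (1 - (cos_theta1 Rc r0 r)\<^sup>2) = r * sqrt (1 - (cos_theta2 Rc r0 r)\<^sup>2)"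
proof -
  have "Rc\<^sup>2 * (1 - (cos_theta1 Rc r0 r)\<^sup>2) = r\<^sup>2 * (1 - (cos_theta2 Rc r0 r)\<^sup>2)"
    unfolding cos_theta1_def cos_theta2_def using assms by (simp add: field_simps power2_eq_square)
  then have "sqrt (Rc\<^sup>2 * (1 - (cos_theta1 Rc r0 r)\<^sup>2)) = sqrt (r\<^sup>2 * (1 - (cos_theta2 Rc r0 r)\<^sup>2))"
    by simp
  then show ?thesis using assms by (simp add: real_sqrt_mult)
qed

lemma cos_theta1_has_derivative:
  "Rc \<noteq> 0 \<Longrightarrow> r0 \<noteq> 0 \<Longrightarrow> (cos_theta1 Rc r0 has_real_derivative - (r / (Rc * r0))) (at r)"
  unfolding cos_theta1_def[abs_def] by (auto intro!: derivative_eq_intros simp: field_simps)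

lemma cos_theta2_has_derivative:
  "r \<noteq> 0 \<Longrightarrow> r0 \<noteq> 0 \<Longrightarrow>
    (cos_theta2 Rc r0 has_real_derivative (r\<^sup>2 - r0\<^sup>2 + Rc\<^sup>2) / (2 * r0 * r\<^sup>2)) (at r)"
  unfolding cos_theta2_def[abs_def] by (auto intro!: derivative_eq_intros simp: field_simps power2_eq_square)

lemma lune_area_segments_has_derivative:
  assumes "0 < r0" "r0 \<le> Rc" "Rc - r0 < r" "r < Rc + r0"
  shows "(lune_area_segments Rc r0 has_real_derivative zeta1 Rc r0 r) (at r)"
proof -
  note bounds = cos_theta_strict_bounds[OF assms]
  have r: "r > 0" and Rc: "Rc > 0" using assms by linarith+
  define c1 s1 c1' where "c1 = cos_theta1 Rc r0 r" and "s1 = sqrt (1 - c1\<^sup>2)" and "c1' = - (r / (Rc * r0))"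
  define c2 s2 c2' where "c2 = cos_theta2 Rc r0 r" and "s2 = sqrt (1 - c2\<^sup>2)"
    and "c2' = (r\<^sup>2 - r0\<^sup>2 + Rc\<^sup>2) / (2 * r0 * r\<^sup>2)"
  have seg1: "((\<lambda>r. unit_segment_area (cos_theta1 Rc r0 r)) has_real_derivative -2 * s1 * c1') (at r)"
    using DERIV_chain2[OF unit_segment_area_has_derivative cos_theta1_has_derivative] bounds Rc assms(1)
    by (simp add: c1_def s1_def c1'_def)
  have seg2: "((\<lambda>r. unit_segment_area (cos_theta2 Rc r0 r)) has_real_derivative -2 * s2 * c2') (at r)"
    using DERIV_chain2[OF unit_segment_area_has_derivative cos_theta2_has_derivative] bounds r assms(1)
    by (simp add: c2_def s2_def c2'_def)
  have sq: "((\<lambda>r. r\<^sup>2) has_real_derivative 2 * r) (at r)" by (auto intro!: derivative_eq_intros)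
  have D: "(lune_area_segments Rc r0 has_real_derivative
      pi * (2 * r) - Rc\<^sup>2 * (-2 * s1 * c1') - (2 * r * unit_segment_area c2 + r\<^sup>2 * (-2 * s2 * c2'))) (at r)"
    unfolding lune_area_segments_def[abs_def] c2_def
    using DERIV_mult[OF sq seg2] by (intro DERIV_diff DERIV_cmult sq seg1) (simp_all add: algebra_simps)
  have "Rc * s1 = r * s2"
    unfolding s1_def s2_def c1_def c2_def by (rule law_of_sines_theta[OF assms(1) Rc r])
  then have s1: "s1 = r * s2 / Rc" using Rc by (simp add: field_simps)
  have c2: "c2 = (r0\<^sup>2 + r\<^sup>2 - Rc\<^sup>2) / (2 * r0 * r)" by (simp add: c2_def cos_theta2_def)
  have E: "pi * (2 * r) - Rc\<^sup>2 * (-2 * s1 * c1') - (2 * r * unit_segment_area c2 + r\<^sup>2 * (-2 * s2 * c2'))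
      = 2 * pi * r - 2 * r * arccos c2"
    unfolding unit_segment_area_def s2_def[symmetric] s1 c1'_def c2'_def
    using r Rc assms(1) by (simp add: c2 field_simps power2_eq_square)
  show ?thesis unfolding zeta1_eq c2_def[symmetric] by (rule DERIV_cong[OF D E])
qed

lemma continuous_on_lune_area_segments:
  assumes "0 < r0" "r0 \<le> Rc"
  shows "continuous_on {Rc - r0 .. Rc + r0} (lune_area_segments Rc r0)"
proof -
  let ?I = "{Rc - r0 .. Rc + r0}"
  have "continuous_on ?I (cos_theta1 Rc r0)"
    unfolding cos_theta1_def using assms by (intro continuous_intros) auto
  moreover have "continuous_on ?I (cos_theta2 Rc r0)"
  proof (cases "r0 = Rc")
    case True
    then have eq: "cos_theta2 Rc r0 = (\<lambda>r. r / (2 * Rc))"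
      by (auto simp: cos_theta2_def power2_eq_square field_simps)
    show ?thesis
      unfolding eq using assms by (intro continuous_on_divide continuous_on_id continuous_on_const) auto
  next
    case False
    then show ?thesis unfolding cos_theta2_def using assms by (intro continuous_intros) auto
  qed
  ultimately show ?thesis
    unfolding lune_area_segments_def using cos_theta_bounds[OF assms]
    by (intro continuous_intros continuous_on_unit_segment_area) auto
qed

lemma lune_area_eq_segments:
  assumes "0 < r0" "r0 \<le> Rc" "Rc - r0 \<le> r" "r \<le> Rc + r0"
  shows "lune_area Rc r0 r = lune_area_segments Rc r0 r"
proof -
  consider "r = Rc - r0" | "Rc - r0 < r" "r < Rc + r0" | "r = Rc + r0" using assms by fastforce
  then show ?thesis
  proof cases
    case 1
    have "cos_theta1 Rc r0 r = 1" "r0 < Rc \<Longrightarrow> cos_theta2 Rc r0 r = -1"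
      unfolding cos_theta1_def cos_theta2_def 1 using assms by (auto simp: field_simps power2_eq_square)
    then show ?thesis
      using 1 assms by (cases "r0 = Rc") (auto simp: lune_area_def lune_area_segments_def)
  next
    case 2
    then show ?thesis
      using cos_theta_strict_bounds[OF assms(1,2) 2]
      by (simp add: lune_area_def zeta2_eq_lune_area_segments)
  next
    case 3
    have "Rc * (r0 * 2) + r0 * (r0 * 2) > 0" using assms by (simp add: add_pos_pos)
    then have "cos_theta1 Rc r0 r = -1" "cos_theta2 Rc r0 r = 1"
      unfolding cos_theta1_def cos_theta2_def 3 using assms by (auto simp: field_simps power2_eq_square)
    then show ?thesis using 3 assms by (simp add: lune_area_def lune_area_segments_def)
  qed
qed

lemma continuous_lune_area:
  assumes "0 \<le> r0" "r0 \<le> Rc"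
  shows "continuous_on UNIV (lune_area Rc r0)"
proof -
  let ?a = "Rc - r0" and ?b = "Rc + r0"
  have "continuous_on {..?a} (lune_area Rc r0)"
    by (rule continuous_on_eq[of _ "\<lambda>_. 0"]) (auto simp: lune_area_def)
  moreover have "continuous_on {?a..?b} (lune_area Rc r0)"
  proof (cases "r0 = 0")
    case False
    then have "0 < r0" using assms by simp
    show ?thesis
      by (rule continuous_on_eq[OF continuous_on_lune_area_segments[OF \<open>0 < r0\<close> assms(2)]])
        (use lune_area_eq_segments[OF \<open>0 < r0\<close> assms(2)] in auto)
  qed simp
  moreover have "continuous_on {?b..} (\<lambda>r. pi * r\<^sup>2 - pi * Rc\<^sup>2)" by (intro continuous_intros)
  then have "continuous_on {?b..} (lune_area Rc r0)"
    by (rule continuous_on_eq) (use assms in \<open>auto simp: lune_area_def\<close>)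
  ultimately have "continuous_on ({..?a} \<union> ({?a..?b} \<union> {?b..})) (lune_area Rc r0)"
    by (intro continuous_on_closed_Un) auto
  moreover have "{..?a} \<union> ({?a..?b} \<union> {?b..}) = UNIV" using assms by auto
  ultimately show ?thesis by simp
qed

lemma lune_area_has_derivative:
  assumes "0 \<le> r0" "r0 \<le> Rc" "r \<notin> {Rc - r0, Rc + r0}"
  shows "(lune_area Rc r0 has_real_derivative outer_arc_length Rc r0 r) (at r)"
proof -
  consider "r < Rc - r0" | "Rc - r0 < r" "r < Rc + r0" | "Rc + r0 < r" using assms by fastforce
  then show ?thesis
  proof cases
    case 1
    have "((\<lambda>_. 0) has_real_derivative outer_arc_length Rc r0 r) (at r)"
      using 1 by (simp add: outer_arc_length_def)
    then show ?thesis
      by (rule has_field_derivative_transform_within_open[where S = "{..<Rc - r0}"])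
        (use 1 in \<open>auto simp: lune_area_def\<close>)
  next
    case 2
    then have "0 < r0" by linarith
    have "(lune_area_segments Rc r0 has_real_derivative outer_arc_length Rc r0 r) (at r)"
      using lune_area_segments_has_derivative[OF \<open>0 < r0\<close> assms(2) 2] 2 by (simp add: outer_arc_length_def)
    then show ?thesis
      by (rule has_field_derivative_transform_within_open[where S = "{Rc - r0<..<Rc + r0}"])
        (use 2 lune_area_eq_segments[OF \<open>0 < r0\<close> assms(2)] in auto)
  next
    case 3
    have "((\<lambda>r. pi * r\<^sup>2 - pi * Rc\<^sup>2) has_real_derivative outer_arc_length Rc r0 r) (at r)"
      using 3 assms by (auto intro!: derivative_eq_intros simp: outer_arc_length_def)
    then show ?thesis
      by (rule has_field_derivative_transform_within_open[where S = "{Rc + r0<..}"])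
        (use 3 assms in \<open>auto simp: lune_area_def\<close>)
  qed
qed

lemma outer_arc_length_nonneg:
  assumes "0 \<le> r0" "r0 \<le> Rc"
  shows "0 \<le> outer_arc_length Rc r0 r"
proof (cases "Rc - r0 < r \<and> r < Rc + r0")
  case True
  then have "0 < r0" by linarith
  then have "arccos (cos_theta2 Rc r0 r) \<le> pi"
    using cos_theta_bounds[OF _ assms(2), of r] True by (intro arccos_ubound) (auto simp: abs_le_iff)
  then show ?thesis
    using True assms by (simp add: outer_arc_length_def zeta1_eq mult_left_mono algebra_simps)
qed (use assms in \<open>auto simp: outer_arc_length_def\<close>)

section \<open>Densities of piecewise differentiable distribution functions\<close>

lemma nn_integral_atMost_eq_if_has_derivative:
  fixes F f :: "real \<Rightarrow> real"
  assumes "continuous_on UNIV F" "finite S"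
    and "\<And>y. y \<notin> S \<Longrightarrow> (F has_real_derivative f y) (at y)"
    and "\<And>y. 0 \<le> f y" and "\<And>y. y \<le> a \<Longrightarrow> f y = 0" and "\<And>y. y \<le> a \<Longrightarrow> F y = 0"
  shows "(\<integral>\<^sup>+y. ennreal (f y) * indicator {..x} y \<partial>lborel) = ennreal (F x)"
proof (cases "x \<le> a")
  case True
  have "f y = 0" if "y \<le> x" for y using assms(5) order_trans[OF that True] by simp
  then have "(\<lambda>y. ennreal (f y) * indicator {..x} y) = (\<lambda>_. 0)" by (intro ext) (auto simp: indicator_def)
  then show ?thesis using True assms(6) by simp
next
  case False
  have "(f has_integral F x - F a) {a..x}"
    using False assms(1-3)
    by (intro fundamental_theorem_of_calculus_interior_strong[of S])
      (auto simp: has_real_derivative_iff_has_vector_derivative[symmetric] intro: continuous_on_subset)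
  then have "(\<integral>\<^sup>+y. ennreal (f y) * indicator {a..x} y \<partial>lborel) = ennreal (F x)"
    using assms(4,6) by (simp add: nn_integral_has_integral_lebesgue')
  moreover have "(\<integral>\<^sup>+y. ennreal (f y) * indicator {..x} y \<partial>lborel)
      = (\<integral>\<^sup>+y. ennreal (f y) * indicator {a..x} y \<partial>lborel)"
    by (intro nn_integral_cong) (use assms(5) in \<open>auto simp: indicator_def\<close>)
  ultimately show ?thesis by simp
qed

lemma distributed_if_cdf_eq_nn_integral:
  fixes X :: "'a \<Rightarrow> real" and f :: "real \<Rightarrow> real"
  assumes "prob_space M" "X \<in> borel_measurable M" "f \<in> borel_measurable borel"
    and cdf: "\<And>x. emeasure M {\<omega>\<in>space M. X \<omega> \<le> x} = (\<integral>\<^sup>+y. ennreal (f y) * indicator {..x} y \<partial>lborel)"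
  shows "distributed M lborel X (\<lambda>y. ennreal (f y))"
proof -
  interpret prob_space M by fact
  have distr_atMost: "emeasure (distr M lborel X) {..x} = emeasure M {\<omega>\<in>space M. X \<omega> \<le> x}" for x
    using assms(2) by (subst emeasure_distr) (auto intro!: arg_cong[where f = "emeasure M"])
  have "sets (borel :: real measure) = sigma_sets UNIV (range atMost)"
    by (subst borel_eq_atMost) simp
  then have "distr M lborel X = density lborel (\<lambda>y. ennreal (f y))"
  proof (intro measure_eqI_generator_eq[where \<Omega> = UNIV and E = "range atMost" and A = "\<lambda>i. {..real i}"])
    show "Int_stable (range atMost :: real set set)"
      by (auto simp: Int_stable_def)
    show "(\<Union>i. {..real i}) = (UNIV :: real set)"
      by (auto intro: real_arch_simple)
    show "emeasure (distr M lborel X) {..real i} \<noteq> \<infinity>" for i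
      using distr_atMost[of "real i"] emeasure_finite by simp
    fix A :: "real set" assume "A \<in> range atMost"
    then show "emeasure (distr M lborel X) A = emeasure (density lborel (\<lambda>y. ennreal (f y))) A"
      using assms(3) by (auto simp: distr_atMost cdf emeasure_density)
  qed auto
  then show ?thesis using assms(2,3) by (simp add: distributed_def)
qed

section \<open>Nearest points of a Poisson process\<close>

text \<open>The definition does not require counting events to be measurable, but an event of
  positive measure must be.\<close>

lemma poisson_void_probability:
  assumes ppp: "poisson_point_process M Phi lam" and "A \<in> sets lborel" "bounded A"
  shows "{\<omega>\<in>space M. Phi \<omega> \<inter> A = {}} \<in> sets M"
    and "measure M {\<omega>\<in>space M. Phi \<omega> \<inter> A = {}} = exp (- lam * measure lborel A)"
proof -
  have "finite (Phi \<omega> \<inter> A)" if "\<omega> \<in> space M" for \<omega>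
    using ppp assms(3) that unfolding poisson_point_process_def by blast
  then have void: "{\<omega>\<in>space M. Phi \<omega> \<inter> A = {}} = {\<omega>\<in>space M. card (Phi \<omega> \<inter> A) = 0}" by auto
  have "measure M {\<omega>\<in>space M. card (Phi \<omega> \<inter> A) = 0}
      = (lam * measure lborel A) ^ 0 / fact 0 * exp (- lam * measure lborel A)"
    using ppp assms(2,3) unfolding poisson_point_process_def by blast
  then show meas: "measure M {\<omega>\<in>space M. Phi \<omega> \<inter> A = {}} = exp (- lam * measure lborel A)"
    by (simp add: void)
  show "{\<omega>\<in>space M. Phi \<omega> \<inter> A = {}} \<in> sets M"
  proof (rule ccontr)
    assume "{\<omega>\<in>space M. Phi \<omega> \<inter> A = {}} \<notin> sets M"
    then have "measure M {\<omega>\<in>space M. Phi \<omega> \<inter> A = {}} = 0" by (rule measure_notin_sets)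
    then show False using meas by simp
  qed
qed

lemma locally_finite_Inf_dist_le_iff:
  fixes P :: "'a::metric_space set"
  assumes fin: "\<And>A. bounded A \<Longrightarrow> finite (P \<inter> A)" and "P \<noteq> {}"
  shows "Inf ((\<lambda>y. dist y x) ` P) \<le> r \<longleftrightarrow> (\<exists>y\<in>P. dist y x \<le> r)"
proof -
  from \<open>P \<noteq> {}\<close> obtain y0 where "y0 \<in> P" by blast
  define Q where "Q = P \<inter> cball x (dist y0 x)"
  have "finite Q" "y0 \<in> Q" unfolding Q_def using fin \<open>y0 \<in> P\<close> by (auto simp: dist_commute)
  define ym where "ym = arg_min_on (\<lambda>y. dist y x) Q"
  have "Q \<noteq> {}" using \<open>y0 \<in> Q\<close> by blast
  note arg_min = arg_min_if_finite[OF \<open>finite Q\<close> this, of "\<lambda>y. dist y x", folded ym_def]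
  have ym: "ym \<in> P" using arg_min(1) by (simp add: Q_def)
  have nearest: "dist ym x \<le> dist z x" if "z \<in> P" for z
  proof (cases "z \<in> Q")
    case True
    then show ?thesis using arg_min(2) by force
  next
    case False
    then have "dist y0 x < dist z x" using that by (auto simp: Q_def dist_commute)
    moreover have "dist ym x \<le> dist y0 x" using arg_min(2) \<open>y0 \<in> Q\<close> by force
    ultimately show ?thesis by simp
  qed
  have "Inf ((\<lambda>y. dist y x) ` P) = dist ym x"
    using ym nearest by (intro cInf_eq_minimum) auto
  then show ?thesis using ym nearest by (auto intro: order_trans)
qed

lemma poisson_no_points_outside_null:
  assumes ppp: "poisson_point_process M Phi lam" and "lam > 0" "C \<in> sets lborel" "bounded C"
  shows "{\<omega>\<in>space M. Phi \<omega> \<subseteq> C} \<in> null_sets M"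
proof -
  interpret prob_space M using ppp by (simp add: poisson_point_process_def)
  define V where "V n = {\<omega>\<in>space M. Phi \<omega> \<inter> (cball 0 (real n) - C) = {}}" for n
  have "bounded (cball 0 (real n) - C)" for n by (rule bounded_subset[OF bounded_cball]) auto
  then have V: "V n \<in> sets M" "measure M (V n) = exp (- lam * measure lborel (cball 0 (real n) - C))" for n
    unfolding V_def using poisson_void_probability[OF ppp] assms(3) by auto
  have "{\<omega>\<in>space M. Phi \<omega> \<subseteq> C} = (\<Inter>n. V n)"
  proof (intro set_eqI iffI)
    fix \<omega> assume "\<omega> \<in> (\<Inter>n. V n)"
    moreover have "y \<in> cball 0 (real (nat \<lceil>norm y\<rceil>))" for y :: "real \<times> real"
      by simp
    ultimately show "\<omega> \<in> {\<omega>\<in>space M. Phi \<omega> \<subseteq> C}" unfolding V_def by blast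
  qed (auto simp: V_def)
  then have sets: "{\<omega>\<in>space M. Phi \<omega> \<subseteq> C} \<in> sets M" using V by auto
  have C_fin: "C \<in> fmeasurable lborel" using assms(3,4) by (intro fmeasurableI emeasure_bounded_finite) auto
  have "measure M {\<omega>\<in>space M. Phi \<omega> \<subseteq> C} \<le> exp (- lam * (pi * (real n)\<^sup>2 - measure lborel C))" for n
  proof -
    have "cball (0 :: real \<times> real) (real n) \<in> fmeasurable lborel"
      by (intro fmeasurableI emeasure_bounded_finite) auto
    from measure_diff_le_measure_setdiff[OF this C_fin]
    have "pi * (real n)\<^sup>2 - measure lborel C \<le> measure lborel (cball 0 (real n) - C)"
      using measure_cball_real_pair[of "real n" 0] by simp
    then have "exp (- lam * measure lborel (cball 0 (real n) - C)) \<le> exp (- lam * (pi * (real n)\<^sup>2 - measure lborel C))"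
      using \<open>lam > 0\<close> by simp
    moreover have "measure M {\<omega>\<in>space M. Phi \<omega> \<subseteq> C} \<le> measure M (V n)"
      using V by (intro finite_measure_mono) (auto simp: V_def)
    ultimately show ?thesis unfolding V(2) by linarith
  qed
  moreover have "(\<lambda>n. exp (- lam * (pi * (real n)\<^sup>2 - measure lborel C))) \<longlonglongrightarrow> 0"
    using \<open>lam > 0\<close> pi_gt_zero by real_asymp
  ultimately have "measure M {\<omega>\<in>space M. Phi \<omega> \<subseteq> C} \<le> 0"
    by (intro LIMSEQ_le_const) auto
  then have "measure M {\<omega>\<in>space M. Phi \<omega> \<subseteq> C} = 0"
    using measure_nonneg[of M "{\<omega>\<in>space M. Phi \<omega> \<subseteq> C}"] by linarith
  then show ?thesis using sets by (simp add: null_sets_def emeasure_eq_measure)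
qed

lemma nearest_point_distance_cdf:
  fixes x :: "real \<times> real"
  assumes ppp: "poisson_point_process M Phi lam" and "lam > 0" "C \<in> sets lborel" "bounded C"
  defines "d \<equiv> \<lambda>\<omega>. Inf ((\<lambda>y. dist y x) ` (Phi \<omega> - C))"
  shows "{\<omega>\<in>space M. d \<omega> \<le> r} \<in> sets M"
    and "measure M {\<omega>\<in>space M. d \<omega> \<le> r} = 1 - exp (- lam * measure lborel (cball x r - C))"
proof -
  interpret prob_space M using ppp by (simp add: poisson_point_process_def)
  define E where "E = {\<omega>\<in>space M. Phi \<omega> \<subseteq> C}"
  define V where "V = {\<omega>\<in>space M. Phi \<omega> \<inter> (cball x r - C) = {}}"
  have E: "E \<in> null_sets M" unfolding E_def using poisson_no_points_outside_null assms by blast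
  have "bounded (cball x r - C)" by (rule bounded_subset[OF bounded_cball]) auto
  then have V: "V \<in> sets M" "measure M V = exp (- lam * measure lborel (cball x r - C))"
    unfolding V_def using poisson_void_probability[OF ppp] assms(3) by auto
  have fin: "finite (Phi \<omega> \<inter> A)" if "\<omega> \<in> space M" "bounded A" for \<omega> A
    using ppp that unfolding poisson_point_process_def by blast
  have d_le: "d \<omega> \<le> r \<longleftrightarrow> \<omega> \<notin> V" if \<omega>: "\<omega> \<in> space M - E" for \<omega>
  proof -
    have "finite ((Phi \<omega> - C) \<inter> A)" if "bounded A" for A
      using fin[OF _ that] \<omega> by (blast intro: finite_subset)
    moreover have "Phi \<omega> - C \<noteq> {}" using \<omega> by (auto simp: E_def)
    ultimately have "d \<omega> \<le> r \<longleftrightarrow> (\<exists>y\<in>Phi \<omega> - C. dist y x \<le> r)"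
      unfolding d_def by (rule locally_finite_Inf_dist_le_iff)
    then show ?thesis using \<omega> by (auto simp: V_def dist_commute)
  qed
  txt \<open>On the null event \<open>E\<close>, \<open>d\<close> takes the junk value \<open>Inf {}\<close>, so \<open>{d \<le> r}\<close> stays measurable.\<close>
  have d_E: "\<omega> \<in> space M \<and> d \<omega> = Inf {}" if "\<omega> \<in> E" for \<omega>
    using that unfolding d_def E_def by (simp add: Diff_eq_empty_iff[THEN iffD2])
  have split: "{\<omega>\<in>space M. d \<omega> \<le> r} = (space M - V - E) \<union> (if Inf {} \<le> r then E else {})"
  proof (intro set_eqI)
    fix \<omega>
    show "\<omega> \<in> {\<omega>\<in>space M. d \<omega> \<le> r} \<longleftrightarrow> \<omega> \<in> (space M - V - E) \<union> (if Inf {} \<le> r then E else {})"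
      using d_le[of \<omega>] d_E[of \<omega>] by (cases "\<omega> \<in> E") auto
  qed
  have null: "(if Inf {} \<le> r then E else {}) \<in> null_sets M" using E by simp
  show "{\<omega>\<in>space M. d \<omega> \<le> r} \<in> sets M"
    unfolding split using V E null by auto
  have "measure M {\<omega>\<in>space M. d \<omega> \<le> r} = measure M (space M - V - E)"
    unfolding split by (rule measure_Un_null_set[OF _ null]) (use V E in auto)
  also have "\<dots> = measure M (space M - V)"
    by (rule measure_Diff_null_set[OF _ E]) (use V in auto)
  also have "\<dots> = 1 - exp (- lam * measure lborel (cball x r - C))"
    using prob_compl[OF V(1)] V(2) by simp
  finally show "measure M {\<omega>\<in>space M. d \<omega> \<le> r} = 1 - exp (- lam * measure lborel (cball x r - C))" .
qed

section \<open>The distribution of \<open>r1\<close>\<close>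

lemma cdf_r1_eq_lune_area: "cdf_r1 lam Rc r0 r = 1 - exp (- lam * lune_area Rc r0 r)"
  by (simp add: cdf_r1_def lune_area_def)

lemma pdf_r1_eq_outer_arc_length:
  "pdf_r1 lam Rc r0 r = lam * outer_arc_length Rc r0 r * exp (- lam * lune_area Rc r0 r)"
  by (simp add: pdf_r1_def outer_arc_length_def lune_area_def)

lemma cdf_r1_has_derivative:
  assumes "0 \<le> r0" "r0 \<le> Rc" "r \<notin> {Rc - r0, Rc + r0}"
  shows "(cdf_r1 lam Rc r0 has_real_derivative pdf_r1 lam Rc r0 r) (at r)"
  unfolding cdf_r1_eq_lune_area[abs_def] pdf_r1_eq_outer_arc_length
  using assms by (auto intro!: derivative_eq_intros lune_area_has_derivative)

lemma continuous_cdf_r1: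
  assumes "0 \<le> r0" "r0 \<le> Rc"
  shows "continuous_on UNIV (cdf_r1 lam Rc r0)"
  unfolding cdf_r1_eq_lune_area[abs_def]
  using continuous_lune_area[OF assms] by (intro continuous_intros) auto

lemma nn_integral_pdf_r1_atMost:
  assumes "0 \<le> lam" "0 \<le> r0" "r0 \<le> Rc"
  shows "(\<integral>\<^sup>+y. ennreal (pdf_r1 lam Rc r0 y) * indicator {..x} y \<partial>lborel) = ennreal (cdf_r1 lam Rc r0 x)"
proof (rule nn_integral_atMost_eq_if_has_derivative[where S = "{Rc - r0, Rc + r0}" and a = "Rc - r0"])
  show "continuous_on UNIV (cdf_r1 lam Rc r0)" using assms by (intro continuous_cdf_r1)
  show "(cdf_r1 lam Rc r0 has_real_derivative pdf_r1 lam Rc r0 y) (at y)" if "y \<notin> {Rc - r0, Rc + r0}" for y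
    using assms that by (intro cdf_r1_has_derivative)
  show "0 \<le> pdf_r1 lam Rc r0 y" for y
    unfolding pdf_r1_eq_outer_arc_length using outer_arc_length_nonneg assms by simp
qed (simp_all add: pdf_r1_def cdf_r1_def)

text \<open>Outside \<open>[-1, 1]\<close>, \<open>arccos\<close> is the junk value of a \<open>THE\<close> over an empty predicate.\<close>

lemma arccos_outside:
  assumes "1 < \<bar>y\<bar>"
  shows "arccos y = arccos 2"
proof -
  have "\<bar>cos x\<bar> \<noteq> \<bar>y\<bar>" "\<bar>cos x\<bar> \<noteq> 2" for x
    using abs_cos_le_one[of x] assms by linarith+
  then have "(\<lambda>x. 0 \<le> x \<and> x \<le> pi \<and> cos x = y) = (\<lambda>x. 0 \<le> x \<and> x \<le> pi \<and> cos x = 2)"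
    by (metis abs_numeral)
  then show ?thesis unfolding arccos_def by simp
qed

lemma borel_measurable_arccos [measurable]: "arccos \<in> borel_measurable borel"
proof -
  have "(\<lambda>y. if y \<in> {-1..1} then arccos y else arccos 2) \<in> borel_measurable borel"
    by (rule borel_measurable_continuous_on_if) (auto intro: continuous_on_arccos')
  moreover have "(\<lambda>y. if y \<in> {-1..1} then arccos y else arccos 2) = arccos"
  proof
    fix y :: real
    show "(if y \<in> {-1..1} then arccos y else arccos 2) = arccos y"
      using arccos_outside[of y] by (cases "y \<in> {-1..1}") auto
  qed
  ultimately show ?thesis by simp
qed

lemma borel_measurable_pdf_r1: "pdf_r1 lam Rc r0 \<in> borel_measurable borel"
  unfolding pdf_r1_def[abs_def] zeta1_def zeta2_def theta1_def theta2_def arcsec_def by measurable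

theorem lemma1:
  fixes M :: "'s measure" and Phi :: "'s \<Rightarrow> (real \<times> real) set"
    and lam Rc r0 :: real and r1 :: "'s \<Rightarrow> real"
  assumes "lam > 0" and "Rc > 0"
    and "poisson_point_process M Phi lam"
    and "0 \<le> r0" and "r0 \<le> Rc"
    and "r1 = (\<lambda>\<omega>. Inf ((\<lambda>y. dist y (r0, 0)) ` (Phi \<omega> - cball 0 Rc)))"
  shows "distributed M lborel r1 (\<lambda>r. ennreal (pdf_r1 lam Rc r0 r))
    \<and> (\<forall>r. measure M {\<omega>\<in>space M. r1 \<omega> \<le> r} = cdf_r1 lam Rc r0 r)"
proof -
  note nearest = nearest_point_distance_cdf[OF assms(3,1), of "cball 0 Rc" "(r0, 0)"]
  have cdf: "measure M {\<omega>\<in>space M. r1 \<omega> \<le> r} = cdf_r1 lam Rc r0 r" for r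
    using nearest(2) by (simp add: assms measure_lune cdf_r1_eq_lune_area)
  have "prob_space M" using assms(3) by (simp add: poisson_point_process_def)
  then interpret prob_space M .
  have "r1 \<in> borel_measurable M"
    using nearest(1) by (simp add: assms(6) borel_measurable_iff_le)
  then have "distributed M lborel r1 (\<lambda>r. ennreal (pdf_r1 lam Rc r0 r))"
    using cdf nn_integral_pdf_r1_atMost[of lam r0 Rc] assms borel_measurable_pdf_r1
    by (intro distributed_if_cdf_eq_nn_integral prob_space_axioms) (auto simp: emeasure_eq_measure)
  then show ?thesis using cdf by blast
qed

end
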